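(* Assume the standing hypotheses (H). Let $A$ be a part of $G$ with $|A|=4$, and let $L_A$ be the set of colors $c$ such that $c\in L(u)\cap L(v)$ for some good pair $\{u,v\}$ for $A$. Then $|L_A|\ge k_3+k_4$.
   Context: A list assignment $L$ assigns to each vertex $v$ a set $L(v)$ of colors; an $L$-coloring is a proper coloring $f$ with $f(v)\in L(v)$ for all $v$; $\mathrm{ch}$ denotes choice number and $\chi$ chromatic number. A part of a complete multipartite graph is one of its maximal stable sets. Standing hypotheses (H): $k\ge1$ and $n\ge 2k+2$ are integers; $G$ is a complete $k$-partite graph (exactly $k$ nonempty parts) on $n$ vertices; $L$ is a list assignment for $G$ with $|L(v)|\ge\lceil (n+k-1)/3\rceil$ for every vertex $v$; $G$ has no $L$-coloring; $\left|\bigcup_{v\in V(G)}L(v)\right|\le n-1$; and every graph $H$ with fewer than $n$ vertices satisfies $\mathrm{ch}(H)\le\max\{\chi(H),\lceil(|V(H)|+\chi(H)-1)/3\rceil\}$. For $i\in\{1,2,3,4\}$, $k_i$ denotes the number of parts of $G$ of size $i$. For a part $A$ with $|A|\ge3$, a pair $\{u,v\}\subseteq A$ of distinct vertices is a good pair for $A$ if either $|A|=3$ and $|L(u)\cap L(v)|\ge\frac{k_1+k_4+1}{3}$, or $|A|=4$ and $|L(u)\cap L(v)|\ge|L(w)\cap L(z)|$ where $\{w,z\}=A\setminus\{u,v\}$. *)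

theory Defs
  imports Complex_Main
begin

text \<open>Simple graphs are given by a finite vertex set and a symmetric, irreflexive
  edge relation (only edges between vertices of the vertex set matter).\<close>

definition simple_graph :: "'v set \<Rightarrow> ('v \<Rightarrow> 'v \<Rightarrow> bool) \<Rightarrow> bool" where
  "simple_graph V E \<longleftrightarrow> finite V \<and> (\<forall>u v. E u v \<longrightarrow> E v u) \<and> (\<forall>v. \<not> E v v)"

definition proper_coloring :: "'v set \<Rightarrow> ('v \<Rightarrow> 'v \<Rightarrow> bool) \<Rightarrow> ('v \<Rightarrow> 'c) \<Rightarrow> bool" where
  "proper_coloring V E f \<longleftrightarrow> (\<forall>u\<in>V. \<forall>v\<in>V. E u v \<longrightarrow> f u \<noteq> f v)"

definition L_coloring :: "'v set \<Rightarrow> ('v \<Rightarrow> 'v \<Rightarrow> bool) \<Rightarrow> ('v \<Rightarrow> 'c set) \<Rightarrow> ('v \<Rightarrow> 'c) \<Rightarrow> bool" where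
  "L_coloring V E L f \<longleftrightarrow> proper_coloring V E f \<and> (\<forall>v\<in>V. f v \<in> L v)"

definition colorable :: "'v set \<Rightarrow> ('v \<Rightarrow> 'v \<Rightarrow> bool) \<Rightarrow> nat \<Rightarrow> bool" where
  "colorable V E k \<longleftrightarrow> (\<exists>f :: 'v \<Rightarrow> nat. proper_coloring V E f \<and> f ` V \<subseteq> {..<k})"

definition chromatic_number :: "'v set \<Rightarrow> ('v \<Rightarrow> 'v \<Rightarrow> bool) \<Rightarrow> nat" where
  "chromatic_number V E = (LEAST k. colorable V E k)"

text \<open>k-choosable: every assignment of (finite) lists of size at least k admits an
  L-coloring. Colors are natural numbers (no loss of generality for finite lists).\<close>
definition choosable :: "'v set \<Rightarrow> ('v \<Rightarrow> 'v \<Rightarrow> bool) \<Rightarrow> nat \<Rightarrow> bool" where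
  "choosable V E k \<longleftrightarrow>
     (\<forall>L :: 'v \<Rightarrow> nat set. (\<forall>v\<in>V. finite (L v) \<and> card (L v) \<ge> k)
        \<longrightarrow> (\<exists>f. L_coloring V E L f))"

definition choice_number :: "'v set \<Rightarrow> ('v \<Rightarrow> 'v \<Rightarrow> bool) \<Rightarrow> nat" where
  "choice_number V E = (LEAST k. choosable V E k)"

text \<open>A complete multipartite graph given by its family of parts P:
  the vertex set is the union of P and two vertices are adjacent iff
  they lie in different parts.\<close>

definition partition_of :: "'a set set \<Rightarrow> 'a set \<Rightarrow> bool" where
  "partition_of P V \<longleftrightarrow> finite V \<and> \<Union>P = V \<and> {} \<notin> P \<and>
     (\<forall>X\<in>P. \<forall>Y\<in>P. X \<noteq> Y \<longrightarrow> X \<inter> Y = {})"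

definition cmp_edge :: "'a set set \<Rightarrow> 'a \<Rightarrow> 'a \<Rightarrow> bool" where
  "cmp_edge P u v \<longleftrightarrow> u \<in> \<Union>P \<and> v \<in> \<Union>P \<and> \<not> (\<exists>X\<in>P. u \<in> X \<and> v \<in> X)"

definition num_parts :: "'a set set \<Rightarrow> nat \<Rightarrow> nat" where
  "num_parts P i = card {X\<in>P. card X = i}"

definition good_pair :: "'a set set \<Rightarrow> ('a \<Rightarrow> 'c set) \<Rightarrow> 'a set \<Rightarrow> 'a \<Rightarrow> 'a \<Rightarrow> bool" where
  "good_pair P L A u v \<longleftrightarrow> u \<in> A \<and> v \<in> A \<and> u \<noteq> v \<and>
     ((card A = 3 \<and> real (card (L u \<inter> L v)) \<ge> (real (num_parts P 1) + real (num_parts P 4) + 1) / 3)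
      \<or> (card A = 4 \<and> (\<forall>w z. A - {u, v} = {w, z} \<longrightarrow> card (L u \<inter> L v) \<ge> card (L w \<inter> L z))))"

end

theory Submission
  imports Defs
begin

text \<open>If three vertices of the part \<open>A\<close> had a colour \<open>c\<close> in common, we could give
  them \<open>c\<close>, delete them and colour the rest from the lists minus \<open>c\<close>: the remaining
  complete multipartite graph has \<open>n - 3\<close> vertices and at most \<open>k\<close> parts, so by minimality
  its choice number is at most \<open>\<lceil>(n+k-1)/3\<rceil> - 1\<close>. Hence no colour lies in three
  lists of \<open>A\<close>, and the sum of the four list sizes is the number of colours used on \<open>A\<close>
  plus the sizes of the six pairwise intersections. The six pairs of \<open>A\<close> form three
  perfect matchings; a good pair of each matching carries at least half of the matching's
  total, and intersections from different matchings share a vertex, so they are disjoint.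
  Thus \<open>2|L_A| \<ge> 4\<lceil>(n+k-1)/3\<rceil> - (n-1)\<close>, which is at least \<open>2(k\<^sub>3+k\<^sub>4)\<close>
  since \<open>3k\<^sub>3+4k\<^sub>4 \<le> n\<close> and \<open>k\<^sub>3+k\<^sub>4 \<le> k\<close>.\<close>

lemma L_coloring_of_lists_ge_card:
  assumes "finite W" "\<forall>v. \<not> F v v" "\<forall>v\<in>W. finite (L v) \<and> card W \<le> card (L v)"
  shows "\<exists>f. L_coloring W F L f"
  using assms(1,3)
proof (induction W rule: finite_induct)
  case empty
  then show ?case by (auto simp: L_coloring_def proper_coloring_def)
next
  case (insert x W)
  then obtain f where f: "L_coloring W F L f" by fastforce
  have "card (f ` W) < card (L x)"
    using insert card_image_le[of W f] by fastforce
  then obtain c where c: "c \<in> L x" "c \<notin> f ` W"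
    using insert.hyps(1) insert.prems by (metis card_mono finite_imageI insertI1 not_le subsetI)
  have "L_coloring (insert x W) F L (f(x := c))"
    using f c insert(2) assms(2) unfolding L_coloring_def proper_coloring_def
    by (auto; metis image_eqI)+
  then show ?case by blast
qed

lemma choosable_card:
  assumes "simple_graph W F"
  shows "choosable W F (card W)"
  using assms L_coloring_of_lists_ge_card unfolding simple_graph_def choosable_def by blast

lemma choosable_mono: "choosable W F a \<Longrightarrow> a \<le> b \<Longrightarrow> choosable W F b"
  unfolding choosable_def by (meson order_trans)

lemma choosable_choice_number:
  assumes "simple_graph W F"
  shows "choosable W F (choice_number W F)"
  unfolding choice_number_def by (rule LeastI, rule choosable_card[OF assms])

lemma chromatic_number_le: "colorable V E m \<Longrightarrow> chromatic_number V E \<le> m"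
  unfolding chromatic_number_def by (rule Least_le)

text \<open>The minimality hypothesis only speaks about graphs on \<open>nat\<close> coloured from
  \<open>nat set\<close> lists, so subgraphs and colours are transported along injections into \<open>nat\<close>.\<close>

definition image_graph :: "('a \<Rightarrow> 'b) \<Rightarrow> 'a set \<Rightarrow> ('a \<Rightarrow> 'a \<Rightarrow> bool) \<Rightarrow> 'b \<Rightarrow> 'b \<Rightarrow> bool" where
  "image_graph g V E i j \<longleftrightarrow> (\<exists>u\<in>V. \<exists>v\<in>V. i = g u \<and> j = g v \<and> E u v)"

lemma image_graph_image_iff:
  "inj_on g V \<Longrightarrow> u \<in> V \<Longrightarrow> v \<in> V \<Longrightarrow> image_graph g V E (g u) (g v) \<longleftrightarrow> E u v"
  unfolding image_graph_def by (metis inj_onD)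

lemma simple_graph_image_graph:
  assumes "finite V" "inj_on g V" "\<forall>u v. E u v \<longrightarrow> E v u" "\<forall>v. \<not> E v v"
  shows "simple_graph (g ` V) (image_graph g V E)"
  using assms unfolding simple_graph_def image_graph_def by (blast dest: inj_onD)

lemma colorable_image_graph:
  assumes "inj_on g V" "colorable V E m"
  shows "colorable (g ` V) (image_graph g V E) m"
proof -
  obtain c :: "'a \<Rightarrow> nat" where c: "proper_coloring V E c" "c ` V \<subseteq> {..<m}"
    using assms(2) unfolding colorable_def by blast
  have "proper_coloring (g ` V) (image_graph g V E) (c \<circ> inv_into V g)"
    using c(1) assms(1) unfolding proper_coloring_def
    by (auto simp: image_graph_image_iff)
  moreover have "(c \<circ> inv_into V g) ` g ` V \<subseteq> {..<m}"
    using c(2) assms(1) by auto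
  ultimately show ?thesis unfolding colorable_def by blast
qed

lemma L_coloring_of_image_graph_choosable:
  fixes L :: "'a \<Rightarrow> 'c set" and g :: "'a \<Rightarrow> nat"
  assumes "finite V" "inj_on g V" "choosable (g ` V) (image_graph g V E) m"
    and lists: "\<forall>v\<in>V. finite (L v) \<and> m \<le> card (L v)"
  shows "\<exists>f. L_coloring V E L f"
proof -
  define C where "C = (\<Union>v\<in>V. L v)"
  obtain h :: "'c \<Rightarrow> nat" where h: "inj_on h C"
    using finite_imp_inj_to_nat_seg[of C] assms(1) lists unfolding C_def by blast
  define L' where "L' = (\<lambda>i. h ` L (inv_into V g i))"
  have L'_image: "L' (g v) = h ` L v" if "v \<in> V" for v
    using that assms(2) unfolding L'_def by simp
  have "\<forall>i\<in>g ` V. finite (L' i) \<and> m \<le> card (L' i)"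
  proof
    fix i assume "i \<in> g ` V"
    then obtain v where v: "v \<in> V" "i = g v" by blast
    have "inj_on h (L v)" using h v(1) unfolding C_def by (blast intro: inj_on_subset)
    then show "finite (L' i) \<and> m \<le> card (L' i)"
      using lists v L'_image by (simp add: card_image)
  qed
  then obtain f' where f': "L_coloring (g ` V) (image_graph g V E) L' f'"
    using assms(3) unfolding choosable_def by blast
  define f where "f = (\<lambda>v. inv_into C h (f' (g v)))"
  have f: "f v \<in> L v \<and> h (f v) = f' (g v)" if "v \<in> V" for v
  proof -
    have "f' (g v) \<in> h ` L v" using f' that L'_image unfolding L_coloring_def by fastforce
    then obtain a where "a \<in> L v" "f' (g v) = h a" by blast
    moreover have "a \<in> C" using \<open>a \<in> L v\<close> that unfolding C_def by blast
    ultimately show ?thesis using h unfolding f_def by simp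
  qed
  have "L_coloring V E L f"
    unfolding L_coloring_def proper_coloring_def
  proof (intro conjI ballI impI)
    fix u v assume "u \<in> V" "v \<in> V" "E u v"
    then have "f' (g u) \<noteq> f' (g v)"
      using f' assms(2) unfolding L_coloring_def proper_coloring_def
      by (auto simp: image_graph_image_iff)
    then show "f u \<noteq> f v" using f \<open>u \<in> V\<close> \<open>v \<in> V\<close> by metis
  qed (use f in blast)
  then show ?thesis by blast
qed

lemma cmp_edge_sym: "cmp_edge P u v \<Longrightarrow> cmp_edge P v u"
  unfolding cmp_edge_def by blast

lemma cmp_edge_irrefl: "\<not> cmp_edge P v v"
  unfolding cmp_edge_def by blast

lemma colorable_cmp_edge:
  assumes "finite P" "V \<subseteq> \<Union>P"
  shows "colorable V (cmp_edge P) (card P)"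
proof -
  obtain p where p: "bij_betw p P {0..<card P}"
    using ex_bij_betw_finite_nat[OF assms(1)] by blast
  define part where "part = (\<lambda>v. SOME X. X \<in> P \<and> v \<in> X)"
  have part: "part v \<in> P \<and> v \<in> part v" if "v \<in> \<Union>P" for v
    using that unfolding part_def by (metis (mono_tags, lifting) UnionE someI)
  have "proper_coloring V (cmp_edge P) (p \<circ> part)"
    unfolding proper_coloring_def
  proof (intro ballI impI)
    fix u v assume "u \<in> V" "v \<in> V" "cmp_edge P u v"
    then have "part u \<noteq> part v" using part assms(2) unfolding cmp_edge_def by blast
    moreover have "part u \<in> P" "part v \<in> P" using part \<open>u \<in> V\<close> \<open>v \<in> V\<close> assms(2) by blast+
    ultimately show "(p \<circ> part) u \<noteq> (p \<circ> part) v"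
      using p by (metis bij_betw_def comp_apply inj_onD)
  qed
  moreover have "(p \<circ> part) ` V \<subseteq> {..<card P}"
    using p part assms(2) by (fastforce simp: bij_betw_def)
  ultimately show ?thesis unfolding colorable_def by blast
qed

lemma L_coloring_extend_by_common_color:
  assumes "\<forall>u\<in>T. \<forall>v\<in>T. \<not> E u v" "\<forall>v\<in>T. c \<in> L v"
    and "L_coloring (V - T) E (\<lambda>v. L v - {c}) f"
  shows "L_coloring V E L (\<lambda>v. if v \<in> T then c else f v)"
  using assms unfolding L_coloring_def proper_coloring_def by (simp split: if_split) blast

lemma choosable_of_choice_number_le:
  "simple_graph W F \<Longrightarrow> int (choice_number W F) \<le> m \<Longrightarrow> choosable W F (nat m)"
  by (rule choosable_mono[OF choosable_choice_number]) auto

lemma choosable_image_graph_cmp_edge: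
  fixes P :: "'a set set" and g :: "'a \<Rightarrow> nat" and t :: int
  assumes part: "partition_of P (\<Union>P)"
    and V: "V \<subseteq> \<Union>P" "card V + 3 = card (\<Union>P)" and g: "inj_on g V"
    and t_gt_parts: "int (card P) < t"
    and t_ge: "\<lceil>(real (card (\<Union>P) - 3) + real (card P) - 1) / 3\<rceil> \<le> t - 1"
    and minimal: "\<forall>(W :: nat set) F. simple_graph W F \<and> card W < card (\<Union>P) \<longrightarrow>
        int (choice_number W F) \<le> max (int (chromatic_number W F))
           \<lceil>(real (card W) + real (chromatic_number W F) - 1) / 3\<rceil>"
  shows "choosable (g ` V) (image_graph g V (cmp_edge P)) (nat (t - 1))"
proof -
  define W where "W = g ` V"
  define F where "F = image_graph g V (cmp_edge P)"
  have "finite (\<Union>P)" using part by (simp add: partition_of_def)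
  then have finite: "finite V" "finite P" using V(1) by (auto dest: finite_UnionD intro: finite_subset)
  have card_W: "card W = card (\<Union>P) - 3" "card W < card (\<Union>P)"
    using V(2) card_image[OF g] unfolding W_def by simp_all
  have simple: "simple_graph W F"
    unfolding W_def F_def using finite g
    by (intro simple_graph_image_graph) (auto simp: cmp_edge_irrefl intro: cmp_edge_sym)
  have chi: "chromatic_number W F \<le> card P"
    unfolding W_def F_def using finite g V(1)
    by (intro chromatic_number_le colorable_image_graph colorable_cmp_edge)
  have "\<lceil>(real (card W) + real (chromatic_number W F) - 1) / 3\<rceil>
      \<le> \<lceil>(real (card (\<Union>P) - 3) + real (card P) - 1) / 3\<rceil>"
    using chi card_W(1) by (intro ceiling_mono divide_right_mono) simp_all
  moreover have "int (choice_number W F) \<le> max (int (chromatic_number W F))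
      \<lceil>(real (card W) + real (chromatic_number W F) - 1) / 3\<rceil>"
    using minimal simple card_W(2) by blast
  ultimately have "int (choice_number W F) \<le> t - 1"
    using chi t_gt_parts t_ge by linarith
  then show ?thesis
    unfolding W_def F_def by (rule choosable_of_choice_number_le[OF simple[unfolded W_def F_def]])
qed

lemma L_coloring_if_part_has_common_color_of_three:
  fixes P :: "'a set set" and L :: "'a \<Rightarrow> 'c set" and t :: int
  assumes part: "partition_of P (\<Union>P)"
    and lists: "\<forall>v\<in>\<Union>P. finite (L v) \<and> t \<le> int (card (L v))"
    and t_gt_parts: "int (card P) < t"
    and t_ge: "\<lceil>(real (card (\<Union>P) - 3) + real (card P) - 1) / 3\<rceil> \<le> t - 1"
    and minimal: "\<forall>(W :: nat set) F. simple_graph W F \<and> card W < card (\<Union>P) \<longrightarrow>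
        int (choice_number W F) \<le> max (int (chromatic_number W F))
           \<lceil>(real (card W) + real (chromatic_number W F) - 1) / 3\<rceil>"
    and T: "X \<in> P" "T \<subseteq> X" "card T = 3" "\<forall>v\<in>T. c \<in> L v"
  shows "\<exists>f. L_coloring (\<Union>P) (cmp_edge P) L f"
proof -
  define V where "V = \<Union>P - T"
  have "finite (\<Union>P)" using part by (simp add: partition_of_def)
  then have "finite V" unfolding V_def by simp
  have "T \<subseteq> \<Union>P" using T by blast
  then have "card T \<le> card (\<Union>P)" "card V = card (\<Union>P) - card T"
    unfolding V_def using \<open>finite (\<Union>P)\<close> by (simp_all add: card_mono card_Diff_subset finite_subset)
  then have "card V + 3 = card (\<Union>P)" using T(3) by simp
  obtain g :: "'a \<Rightarrow> nat" where g: "inj_on g V"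
    using finite_imp_inj_to_nat_seg[OF \<open>finite V\<close>] by blast
  have "V \<subseteq> \<Union>P" unfolding V_def by blast
  have choosable: "choosable (g ` V) (image_graph g V (cmp_edge P)) (nat (t - 1))"
    by (rule choosable_image_graph_cmp_edge[OF part \<open>V \<subseteq> \<Union>P\<close> \<open>card V + 3 = card (\<Union>P)\<close> g
        t_gt_parts t_ge minimal])
  have lists_V: "\<forall>v\<in>V. finite (L v - {c}) \<and> nat (t - 1) \<le> card (L v - {c})"
  proof
    fix v assume "v \<in> V"
    then have "finite (L v)" "t \<le> int (card (L v))" using lists unfolding V_def by blast+
    then show "finite (L v - {c}) \<and> nat (t - 1) \<le> card (L v - {c})"
      by (simp add: card_Diff_singleton_if) linarith
  qed
  obtain f where "L_coloring V (cmp_edge P) (\<lambda>v. L v - {c}) f"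
    using L_coloring_of_image_graph_choosable[OF \<open>finite V\<close> g choosable lists_V] by blast
  moreover have "\<forall>u\<in>T. \<forall>v\<in>T. \<not> cmp_edge P u v"
    using T(1,2) unfolding cmp_edge_def by blast
  ultimately have "L_coloring (\<Union>P) (cmp_edge P) L (\<lambda>v. if v \<in> T then c else f v)"
    using T(4) unfolding V_def by (intro L_coloring_extend_by_common_color)
  then show ?thesis by blast
qed

lemma card_four_sets_no_triple:
  assumes f: "finite La" "finite Lb" "finite Lc" "finite Ld"
    and e: "La \<inter> Lb \<inter> Lc = {}" "La \<inter> Lb \<inter> Ld = {}" "La \<inter> Lc \<inter> Ld = {}" "Lb \<inter> Lc \<inter> Ld = {}"
  shows "card La + card Lb + card Lc + card Ld = card (La \<union> Lb \<union> Lc \<union> Ld)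
     + card (La \<inter> Lb) + card (La \<inter> Lc) + card (La \<inter> Ld)
     + card (Lb \<inter> Lc) + card (Lb \<inter> Ld) + card (Lc \<inter> Ld)"
proof -
  have "card ((La \<union> Lb) \<inter> Lc) = card (La \<inter> Lc) + card (Lb \<inter> Lc)"
    unfolding Int_Un_distrib2 by (rule card_Un_disjoint) (use f e in auto)
  moreover have "card ((La \<union> Lb) \<inter> Ld) = card (La \<inter> Ld) + card (Lb \<inter> Ld)"
    unfolding Int_Un_distrib2 by (rule card_Un_disjoint) (use f e in auto)
  moreover have "card ((La \<union> Lb \<union> Lc) \<inter> Ld) = card ((La \<union> Lb) \<inter> Ld) + card (Lc \<inter> Ld)"
    unfolding Int_Un_distrib2[of "La \<union> Lb"] by (rule card_Un_disjoint) (use f e in auto)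
  moreover have "card La + card Lb = card (La \<union> Lb) + card (La \<inter> Lb)"
    and "card (La \<union> Lb) + card Lc = card (La \<union> Lb \<union> Lc) + card ((La \<union> Lb) \<inter> Lc)"
    and "card (La \<union> Lb \<union> Lc) + card Ld = card (La \<union> Lb \<union> Lc \<union> Ld) + card ((La \<union> Lb \<union> Lc) \<inter> Ld)"
    using f by (intro card_Un_Int; simp)+
  ultimately show ?thesis by linarith
qed

lemma good_pair_if_ge_complement:
  assumes A: "card A = 4" "A = {x, y, w, z}"
    and ge: "card (L w \<inter> L z) \<le> card (L x \<inter> L y)"
  shows "good_pair P L A x y"
proof -
  have "distinct [x, y, w, z]"
    using A by (intro card_distinct) simp
  then have complement: "A - {x, y} = {w, z}" and "x \<in> A" "y \<in> A" "x \<noteq> y"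
    using A(2) by auto
  have "card (L w' \<inter> L z') \<le> card (L x \<inter> L y)" if "A - {x, y} = {w', z'}" for w' z'
  proof -
    from that complement have "w' = w \<and> z' = z \<or> w' = z \<and> z' = w"
      by (metis doubleton_eq_iff)
    then show ?thesis using ge by (metis Int_commute)
  qed
  then show ?thesis
    unfolding good_pair_def using A(1) \<open>x \<in> A\<close> \<open>y \<in> A\<close> \<open>x \<noteq> y\<close> by blast
qed

lemma good_pair_in_matching:
  assumes "card A = 4" "A = {a, b, c, d}"
  obtains u v where "good_pair P L A u v"
    "L u \<inter> L v = L a \<inter> L b \<or> L u \<inter> L v = L c \<inter> L d"
    "card (L a \<inter> L b) + card (L c \<inter> L d) \<le> 2 * card (L u \<inter> L v)"
proof (cases "card (L c \<inter> L d) \<le> card (L a \<inter> L b)")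
  case True
  show ?thesis
    by (rule that[of a b]) (use True good_pair_if_ge_complement[OF assms, of L] in auto)
next
  case False
  have "A = {c, d, a, b}" using assms(2) by blast
  then show ?thesis
    by (intro that[of c d]) (use False good_pair_if_ge_complement[OF assms(1), of c d a b L] in auto)
qed

lemma card_eq_4_obtain:
  assumes "card A = 4"
  obtains a b c d where "A = {a, b, c, d}" "distinct [a, b, c, d]"
proof -
  obtain a B where "A = insert a B" "a \<notin> B" "card B = 3"
    using assms card_Suc_eq[of A 3] by auto
  moreover obtain b c d where "B = {b, c, d}" "b \<noteq> c" "c \<noteq> d" "b \<noteq> d"
    using \<open>card B = 3\<close> card_3_iff by metis
  ultimately show ?thesis using that[of a b c d] by auto
qed

lemma sum_pairwise_Int_le_good_pair_colors:
  assumes A: "card A = 4" "A = {a, b, c, d}"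
    and finite: "finite (L a)" "finite (L b)" "finite (L c)" "finite (L d)"
    and empty: "L a \<inter> L b \<inter> L c = {}" "L a \<inter> L b \<inter> L d = {}" "L a \<inter> L c \<inter> L d = {}"
      "L b \<inter> L c \<inter> L d = {}"
  shows "card (L a \<inter> L b) + card (L a \<inter> L c) + card (L a \<inter> L d)
      + card (L b \<inter> L c) + card (L b \<inter> L d) + card (L c \<inter> L d)
    \<le> 2 * card {x. \<exists>u v. good_pair P L A u v \<and> x \<in> L u \<inter> L v}"
proof -
  define S where "S = {x. \<exists>u v. good_pair P L A u v \<and> x \<in> L u \<inter> L v}"
  obtain u1 v1 where M1: "good_pair P L A u1 v1"
    "L u1 \<inter> L v1 = L a \<inter> L b \<or> L u1 \<inter> L v1 = L c \<inter> L d"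
    "card (L a \<inter> L b) + card (L c \<inter> L d) \<le> 2 * card (L u1 \<inter> L v1)"
    using good_pair_in_matching[OF A] .
  have "A = {a, c, b, d}" using A(2) by blast
  then obtain u2 v2 where M2: "good_pair P L A u2 v2"
    "L u2 \<inter> L v2 = L a \<inter> L c \<or> L u2 \<inter> L v2 = L b \<inter> L d"
    "card (L a \<inter> L c) + card (L b \<inter> L d) \<le> 2 * card (L u2 \<inter> L v2)"
    using good_pair_in_matching[OF A(1)] by blast
  have "A = {a, d, b, c}" using A(2) by blast
  then obtain u3 v3 where M3: "good_pair P L A u3 v3"
    "L u3 \<inter> L v3 = L a \<inter> L d \<or> L u3 \<inter> L v3 = L b \<inter> L c"
    "card (L a \<inter> L d) + card (L b \<inter> L c) \<le> 2 * card (L u3 \<inter> L v3)"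
    using good_pair_in_matching[OF A(1)] by blast
  define M where "M = (L u1 \<inter> L v1) \<union> (L u2 \<inter> L v2) \<union> (L u3 \<inter> L v3)"
  have "S \<subseteq> (\<Union>v\<in>A. L v)" unfolding S_def good_pair_def by blast
  moreover have "finite (\<Union>v\<in>A. L v)" using finite A(2) by simp
  ultimately have "finite S" by (rule finite_subset)
  moreover have "M \<subseteq> S" unfolding M_def S_def using M1(1) M2(1) M3(1) by blast
  ultimately have "card M \<le> card S" by (rule card_mono)
  moreover have "card M = card (L u1 \<inter> L v1) + card (L u2 \<inter> L v2) + card (L u3 \<inter> L v3)"
  proof -
    have "finite (L u1 \<inter> L v1)" "finite (L u2 \<inter> L v2)" "finite (L u3 \<inter> L v3)"
      using M1(2) M2(2) M3(2) finite by auto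
    moreover have "L u1 \<inter> L v1 \<subseteq> L a \<inter> L b \<union> L c \<inter> L d"
      "L u2 \<inter> L v2 \<subseteq> L a \<inter> L c \<union> L b \<inter> L d"
      "L u3 \<inter> L v3 \<subseteq> L a \<inter> L d \<union> L b \<inter> L c"
      using M1(2) M2(2) M3(2) by auto
    then have "(L u1 \<inter> L v1) \<inter> (L u2 \<inter> L v2) = {}"
      "((L u1 \<inter> L v1) \<union> (L u2 \<inter> L v2)) \<inter> (L u3 \<inter> L v3) = {}"
      using empty by blast+
    ultimately show ?thesis unfolding M_def by (simp add: card_Un_disjoint)
  qed
  ultimately show ?thesis using M1(3) M2(3) M3(3) unfolding S_def by linarith
qed

lemma sum_card_le_card_UN_add_good_pair_colors:
  assumes A: "card A = 4" and finite: "\<forall>v\<in>A. finite (L v)"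
    and no_triple: "\<And>T c. T \<subseteq> A \<Longrightarrow> card T = 3 \<Longrightarrow> \<not> (\<forall>v\<in>T. c \<in> L v)"
  shows "(\<Sum>v\<in>A. card (L v))
    \<le> card (\<Union>v\<in>A. L v) + 2 * card {c. \<exists>u v. good_pair P L A u v \<and> c \<in> L u \<inter> L v}"
proof -
  obtain a b c d where A_eq: "A = {a, b, c, d}" and distinct: "distinct [a, b, c, d]"
    using card_eq_4_obtain[OF A] .
  have no_triple': "L x \<inter> L y \<inter> L z = {}" if "{x, y, z} \<subseteq> A" "distinct [x, y, z]" for x y z
    using no_triple[OF that(1)] that(2) by auto
  have empty: "L a \<inter> L b \<inter> L c = {}" "L a \<inter> L b \<inter> L d = {}" "L a \<inter> L c \<inter> L d = {}"
    "L b \<inter> L c \<inter> L d = {}"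
    using distinct by (intro no_triple'; simp add: A_eq)+
  have finite_abcd: "finite (L a)" "finite (L b)" "finite (L c)" "finite (L d)"
    using finite A_eq by simp_all
  have "(\<Sum>v\<in>A. card (L v)) = card (L a) + card (L b) + card (L c) + card (L d)"
    and "card (\<Union>v\<in>A. L v) = card (L a \<union> L b \<union> L c \<union> L d)"
    using distinct by (auto simp: A_eq Un_assoc)
  then show ?thesis
    using card_four_sets_no_triple[OF finite_abcd empty]
      sum_pairwise_Int_le_good_pair_colors[OF A A_eq finite_abcd empty, of P] by linarith
qed

lemma num_parts_add_le:
  assumes "finite P" "i \<noteq> j"
  shows "num_parts P i + num_parts P j \<le> card P"
proof -
  have "num_parts P i + num_parts P j = card ({X\<in>P. card X = i} \<union> {X\<in>P. card X = j})"
    unfolding num_parts_def using assms by (subst card_Un_disjoint) auto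
  also have "\<dots> \<le> card P" using assms(1) by (intro card_mono) auto
  finally show ?thesis .
qed

lemma num_parts_weighted_le:
  assumes "partition_of P V" "i \<noteq> j"
  shows "i * num_parts P i + j * num_parts P j \<le> card V"
proof -
  have V: "finite V" "V = \<Union>P" and "finite P" and disjoint: "pairwise disjnt P"
    using assms(1) unfolding partition_of_def pairwise_def disjnt_def
    by (auto dest: finite_UnionD)
  have "i * num_parts P i + j * num_parts P j
      = sum card ({X\<in>P. card X = i} \<union> {X\<in>P. card X = j})"
    unfolding num_parts_def using \<open>finite P\<close> assms(2) by (subst sum.union_disjoint) auto
  also have "\<dots> \<le> sum card P" using \<open>finite P\<close> by (intro sum_mono2) auto
  also have "\<dots> = card V"
    using V by (metis card_Union_disjoint disjoint finite_subset Union_upper)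
  finally show ?thesis .
qed

lemma ceiling_list_size_bounds:
  fixes n k :: nat
  assumes "1 \<le> k" "2 * k + 2 \<le> n"
  shows "int k < \<lceil>(real n + real k - 1) / 3\<rceil>"
    and "\<lceil>(real (n - 3) + real k - 1) / 3\<rceil> = \<lceil>(real n + real k - 1) / 3\<rceil> - 1"
    and "int n + int k - 1 \<le> 3 * \<lceil>(real n + real k - 1) / 3\<rceil>"
proof -
  show "int k < \<lceil>(real n + real k - 1) / 3\<rceil>"
    using assms(2) by (simp add: less_ceiling_iff)
  have "(real (n - 3) + real k - 1) / 3 = (real n + real k - 1) / 3 - 1"
    using assms by (simp add: of_nat_diff field_simps)
  then show "\<lceil>(real (n - 3) + real k - 1) / 3\<rceil> = \<lceil>(real n + real k - 1) / 3\<rceil> - 1"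
    by (simp only: ceiling_diff_one)
  have "real_of_int (int n + int k - 1) \<le> real_of_int (3 * \<lceil>(real n + real k - 1) / 3\<rceil>)"
    using le_of_int_ceiling[of "(real n + real k - 1) / 3"] by (simp del: le_of_int_ceiling)
  then show "int n + int k - 1 \<le> 3 * \<lceil>(real n + real k - 1) / 3\<rceil>"
    by (simp only: of_int_le_iff)
qed

theorem lemma31:
  fixes P :: "'a set set" and L :: "'a \<Rightarrow> 'c set" and n k :: nat
  assumes part: "partition_of P (\<Union>P)"
    and n_def: "n = card (\<Union>P)"
    and k_def: "k = card P"
    and k1: "k \<ge> 1"
    and nk: "n \<ge> 2 * k + 2"
    and lists: "\<forall>v\<in>\<Union>P. of_nat (card (L v)) \<ge> \<lceil>(real n + real k - 1) / 3\<rceil>"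
    and noncol: "\<not> (\<exists>f :: 'a \<Rightarrow> 'c. L_coloring (\<Union>P) (cmp_edge P) L f)"
    and fin_colors: "finite (\<Union>v\<in>\<Union>P. L v)"
    and few_colors: "card (\<Union>v\<in>\<Union>P. L v) \<le> n - 1"
    and minimal: "\<forall>(W :: nat set) F. simple_graph W F \<and> card W < n \<longrightarrow>
        int (choice_number W F) \<le> max (int (chromatic_number W F))
           \<lceil>(real (card W) + real (chromatic_number W F) - 1) / 3\<rceil>"
    and A: "A \<in> P" "card A = 4"
  shows "card {c. \<exists>u v. good_pair P L A u v \<and> c \<in> L u \<inter> L v}
           \<ge> num_parts P 3 + num_parts P 4"
proof -
  define t where "t = \<lceil>(real n + real k - 1) / 3\<rceil>"
  have t: "int k < t" "\<lceil>(real (n - 3) + real k - 1) / 3\<rceil> = t - 1"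
    "int n + int k - 1 \<le> 3 * t"
    using ceiling_list_size_bounds[OF k1 nk] unfolding t_def by simp_all
  have list_sizes: "\<forall>v\<in>\<Union>P. finite (L v) \<and> t \<le> int (card (L v))"
  proof
    fix v assume "v \<in> \<Union>P"
    then have "finite (L v)" using fin_colors by (meson UN_upper finite_subset)
    then show "finite (L v) \<and> t \<le> int (card (L v))"
      using lists \<open>v \<in> \<Union>P\<close> unfolding t_def by blast
  qed
  have no_triple: "\<not> (\<forall>v\<in>T. c \<in> L v)" if "T \<subseteq> A" "card T = 3" for T c
  proof
    assume "\<forall>v\<in>T. c \<in> L v"
    with noncol show False
      using L_coloring_if_part_has_common_color_of_three[OF part list_sizes t(1)[unfolded k_def]
          t(2)[THEN eq_refl, unfolded n_def k_def] minimal[unfolded n_def] A(1) that] by blast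
  qed
  have "(\<Sum>v\<in>A. card (L v)) \<le> card (\<Union>v\<in>A. L v)
      + 2 * card {c. \<exists>u v. good_pair P L A u v \<and> c \<in> L u \<inter> L v}"
    using sum_card_le_card_UN_add_good_pair_colors[OF A(2) _ no_triple] list_sizes A(1) by blast
  moreover have "card (\<Union>v\<in>A. L v) \<le> n - 1"
    using few_colors card_mono[OF fin_colors, of "\<Union>v\<in>A. L v"] A(1) by fastforce
  moreover have "4 * t \<le> int (\<Sum>v\<in>A. card (L v))"
  proof -
    have "of_nat (card A) * t \<le> (\<Sum>v\<in>A. int (card (L v)))"
      by (rule sum_bounded_below) (use list_sizes A(1) in blast)
    then show ?thesis using A(2) by simp
  qed
  moreover have "finite P" using part unfolding partition_of_def by (simp add: finite_UnionD)
  then have "num_parts P 3 + num_parts P 4 \<le> k" "3 * num_parts P 3 + 4 * num_parts P 4 \<le> n"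
    using num_parts_add_le[of P 3 4] num_parts_weighted_le[OF part, of 3 4]
    unfolding k_def n_def by simp_all
  ultimately show ?thesis using t(3) nk by linarith
qed

end
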